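(* Let $n > 0$ be real and $m \ge 1$ an integer. For $a \in (0,n]$ let $\Delta_a^m$ be the set of real polynomials $h(t) = u_m t^m + \dots + u_1 t + u_0$ of degree exactly $m$ with all coefficients $u_i \ge 0$ such that, as a function on $[-n,n]$, $h$ attains its minimum at the point $-a$, and $h'(-a) = 0$. Then: (1) If $m$ is even, then $$ \min_{a\in(0,n]}\ \min_{h\in\Delta_a^m} \frac{h(n)}{2h(n)-2h(-a)} = \min_{h\in\Delta_n^m}\frac{h(n)}{2h(n)-2h(-n)} = \frac{h^*(n)}{2h^*(n)-2h^*(-n)} = \frac{m+1}{4m}, $$ where $h^*(t) = t^m + m n^{m-1} t$ (which belongs to $\Delta_n^m$). (2) If $m \ge 2$ is odd, then $$ \inf_{h\in\Delta_n^m}\frac{h(n)}{2h(n)-2h(-n)} \ge \min_{h\in\Delta_n^{m-1}}\frac{h(n)}{2h(n)-2h(-n)}. $$ *)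

theory Defs
  imports Complex_Main "HOL-Computational_Algebra.Polynomial"
begin

definition Delta :: "real \<Rightarrow> real \<Rightarrow> nat \<Rightarrow> real poly set" where
  "Delta n a m = {h. degree h = m \<and> (\<forall>i. coeff h i \<ge> 0)
      \<and> (\<forall>t\<in>{-n..n}. poly h (-a) \<le> poly h t)
      \<and> poly (pderiv h) (-a) = 0}"

definition ratio :: "real \<Rightarrow> real \<Rightarrow> real poly \<Rightarrow> real" where
  "ratio n a h = poly h n / (2 * poly h n - 2 * poly h (-a))"

end

theory Submission
  imports Defs
begin

text \<open>
  Write h = \<Sum> u_i t^i with u_i \<ge> 0 and h'(-a) = 0.  Subtracting the vanishing
  quantity 2(-a)h'(-a) = \<Sum> 2i u_i (-a)^i from a linear combination of h(n) and h(-a) gives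
    \<alpha> h(n) + \<beta> h(-a) = \<Sum> u_i (\<alpha> n^i + (\<beta> - 2i)(-a)^i),
  so the combination is nonnegative as soon as every monomial term is.  For c > 0 the
  inequality (c-1) h(n) + (c+1) h(-a) \<ge> 0 is equivalent to ratio \<ge> (c+1)/(4c), because
  h(-a) < h(n) for every h in Delta.  Taking c = m gives the bound (m+1)/(4m) on Delta_a^m for all
  a \<in> (0,n]; for odd m and a = n the sharper choice c = m - 1 gives m/(4(m-1)).
  The polynomial h*(t) = t^m + m n^(m-1) t lies in Delta_n^m for even m (its minimality on
  [-n,n] is the mean-value bound n^(k+1) - s^(k+1) \<le> (k+1)n^k(n-s)) and attains (m+1)/(4m).
  For odd m the minimiser of degree m-1 attains m/(4(m-1)), which yields part (2).
  The sections below follow this order: coefficient expansions, the reduction to monomial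
  inequalities, the two ratio bounds, the extremal polynomial, and finally the theorem.
\<close>

lemma poly_as_sum:
  fixes p :: "'a::comm_semiring_1 poly"
  assumes "degree p \<le> m"
  shows "poly p x = (\<Sum>i\<le>m. coeff p i * x ^ i)"
proof -
  have "poly p x = (\<Sum>i\<le>degree p. coeff p i * x ^ i)" by (rule poly_altdef)
  also have "\<dots> = (\<Sum>i\<le>m. coeff p i * x ^ i)"
    by (rule sum.mono_neutral_left) (use assms in \<open>auto simp: coeff_eq_0\<close>)
  finally show ?thesis .
qed

text \<open>Euler's identity x p'(x) = \<Sum> i u_i x^i, which turns the critical-point condition
  into a statement about the coefficients.\<close>
lemma euler_identity:
  fixes p :: "real poly"
  assumes "degree p \<le> m"
  shows "x * poly (pderiv p) x = (\<Sum>i\<le>m. real i * coeff p i * x ^ i)"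
proof -
  define g where "g j = real j * coeff p j * x ^ j" for j
  have "degree (pderiv p) \<le> m" using assms by (simp add: degree_pderiv)
  then have "x * poly (pderiv p) x = x * (\<Sum>i\<le>m. coeff (pderiv p) i * x ^ i)"
    by (simp add: poly_as_sum)
  also have "\<dots> = (\<Sum>i\<le>m. g (Suc i))"
    by (simp add: sum_distrib_left coeff_pderiv g_def algebra_simps)
  also have "\<dots> = (\<Sum>i\<le>Suc m. g i)"
    by (subst sum.atMost_Suc_shift) (simp add: g_def)
  also have "\<dots> = (\<Sum>i\<le>m. g i)"
    using assms by (simp add: g_def coeff_eq_0)
  finally show ?thesis by (simp add: g_def)
qed

lemma critical_combination_nonneg:
  fixes h :: "real poly"
  assumes deg: "degree h \<le> m" and coeffs: "\<forall>i. coeff h i \<ge> 0"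
    and critical: "poly (pderiv h) x = 0"
    and monomials: "\<And>i. i \<le> m \<Longrightarrow> \<alpha> * y ^ i + (\<beta> - 2 * real i) * x ^ i \<ge> 0"
  shows "\<alpha> * poly h y + \<beta> * poly h x \<ge> 0"
proof -
  have "\<alpha> * poly h y + \<beta> * poly h x = \<alpha> * poly h y + \<beta> * poly h x - 2 * (x * poly (pderiv h) x)"
    using critical by simp
  also have "\<dots> = (\<Sum>i\<le>m. coeff h i * (\<alpha> * y ^ i + (\<beta> - 2 * real i) * x ^ i))"
    unfolding poly_as_sum[OF deg, of y] poly_as_sum[OF deg, of x] euler_identity[OF deg]
    by (simp add: sum_distrib_left sum_subtractf sum.distrib[symmetric] algebra_simps)
  also have "\<dots> \<ge> 0"
    using coeffs monomials by (intro sum_nonneg mult_nonneg_nonneg) auto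
  finally show ?thesis .
qed

text \<open>Monomial inequality behind the bound (m+1)/(4m), valid for every a \<in> (0,n]:
  |m + 1 - 2i| \<le> m - 1 for 1 \<le> i \<le> m, and |(-a)^i| \<le> n^i.\<close>
lemma monomial_bound_general:
  fixes a n :: real
  assumes "0 < a" "a \<le> n" "1 \<le> m" "i \<le> m"
  shows "(real m - 1) * n ^ i + (real m + 1 - 2 * real i) * (-a) ^ i \<ge> 0"
proof (cases "i = 0")
  case True
  then show ?thesis using assms by simp
next
  case False
  have coeff_bound: "\<bar>real m + 1 - 2 * real i\<bar> \<le> real m - 1" using False assms by auto
  have power_bound: "\<bar>(-a) ^ i\<bar> \<le> n ^ i" using assms by (simp add: power_abs power_mono)
  have "\<bar>(real m + 1 - 2 * real i) * (-a) ^ i\<bar> \<le> (real m - 1) * n ^ i"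
    unfolding abs_mult by (rule mult_mono[OF coeff_bound power_bound]) (use assms in auto)
  then show ?thesis by linarith
qed

text \<open>Monomial inequality behind the bound m/(4(m-1)) at a = n for odd m: even powers
  (i < m) contribute (2m - 2 - 2i) n^i, odd powers contribute (2i - 2) n^i.\<close>
lemma monomial_bound_odd:
  fixes n :: real
  assumes "0 < n" "odd m" "i \<le> m"
  shows "(real m - 2) * n ^ i + (real m - 2 * real i) * (-n) ^ i \<ge> 0"
proof (cases "even i")
  case True
  then have "real i + 1 \<le> real m" using assms by (cases "i = m") auto
  moreover have "(real m - 2) * n ^ i + (real m - 2 * real i) * (-n) ^ i
      = (2 * real m - 2 - 2 * real i) * n ^ i"
    using True by (simp add: algebra_simps)
  ultimately show ?thesis using assms by simp
next
  case False
  then have "i \<ge> 1" by (cases i) auto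
  moreover have "(real m - 2) * n ^ i + (real m - 2 * real i) * (-n) ^ i = (2 * real i - 2) * n ^ i"
    using False by (simp add: algebra_simps)
  ultimately show ?thesis using assms by simp
qed

text \<open>Every member of Delta has a positive denominator: h(-a) \<le> h(0) = u_0 < u_0 + u_m n^m \<le> h(n).\<close>
lemma Delta_value_lt:
  assumes "h \<in> Delta n a m" "m \<ge> 1" "n > 0"
  shows "poly h (-a) < poly h n"
proof -
  have deg: "degree h = m" and coeffs: "\<forall>i. coeff h i \<ge> 0"
    and minimal: "\<forall>t\<in>{-n..n}. poly h (-a) \<le> poly h t"
    using assms(1) by (auto simp: Delta_def)
  have "coeff h m \<noteq> 0" using deg assms(2) by (metis leading_coeff_0_iff not_one_le_zero degree_0)
  then have lead_pos: "coeff h m > 0" using coeffs by (metis order.not_eq_order_implies_strict)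
  have "poly h (-a) \<le> poly h 0" using minimal assms(3) by auto
  also have "poly h 0 = coeff h 0" by (simp add: poly_0_coeff_0)
  also have "coeff h 0 < (\<Sum>i\<in>{0,m}. coeff h i * n ^ i)" using lead_pos assms(2,3) by simp
  also have "\<dots> \<le> (\<Sum>i\<le>m. coeff h i * n ^ i)"
    by (rule sum_mono2) (use coeffs assms(3) in auto)
  also have "\<dots> = poly h n" using poly_as_sum[of h m n] deg by simp
  finally show ?thesis .
qed

lemma ratio_lower_bound:
  fixes c :: real
  assumes "c > 0" "poly h (-a) < poly h n"
    and "(c - 1) * poly h n + (c + 1) * poly h (-a) \<ge> 0"
  shows "(c + 1) / (4 * c) \<le> ratio n a h"
proof -
  have "(c + 1) * (2 * poly h n - 2 * poly h (-a)) \<le> 4 * c * poly h n"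
    using assms(3) by (simp add: algebra_simps)
  then show ?thesis
    using assms(1,2) unfolding ratio_def by (simp add: divide_simps mult.commute)
qed

lemma Delta_ratio_bound:
  assumes "n > 0" "m \<ge> 1" "a \<in> {0<..n}" "h \<in> Delta n a m"
  shows "(real m + 1) / (4 * real m) \<le> ratio n a h"
proof -
  have "(real m - 1) * poly h n + (real m + 1) * poly h (-a) \<ge> 0"
    using assms monomial_bound_general[of a n m]
    by (intro critical_combination_nonneg[where m = m]) (auto simp: Delta_def)
  then show ?thesis
    using assms Delta_value_lt by (intro ratio_lower_bound) auto
qed

lemma Delta_ratio_bound_odd:
  assumes "n > 0" "odd m" "m \<ge> 2" "h \<in> Delta n n m"
  shows "real m / (4 * (real m - 1)) \<le> ratio n n h"
proof -
  have "(real m - 2) * poly h n + real m * poly h (-n) \<ge> 0"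
    using assms monomial_bound_odd[of n m]
    by (intro critical_combination_nonneg[where m = m]) (auto simp: Delta_def)
  then have "((real m - 1) + 1) / (4 * (real m - 1)) \<le> ratio n n h"
    using assms Delta_value_lt by (intro ratio_lower_bound) auto
  then show ?thesis by simp
qed

definition extremal_poly :: "real \<Rightarrow> nat \<Rightarrow> real poly" where
  "extremal_poly n m = monom 1 m + monom (real m * n ^ (m - 1)) 1"

lemma poly_extremal_poly: "poly (extremal_poly n m) t = t ^ m + real m * n ^ (m - 1) * t"
  by (simp add: extremal_poly_def poly_monom)

text \<open>Mean-value bound for powers, n^(k+1) - s^(k+1) \<le> (k+1) n^k (n - s) for 0 \<le> s \<le> n;
  it shows that h* attains its minimum on [-n,0] at -n.\<close>
lemma power_diff_le:
  fixes s n :: real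
  assumes "0 \<le> s" "s \<le> n"
  shows "n ^ Suc k - s ^ Suc k \<le> real (Suc k) * n ^ k * (n - s)"
proof (induction k)
  case 0
  then show ?case by simp
next
  case (Suc k)
  have "n ^ Suc (Suc k) - s ^ Suc (Suc k) = n * (n ^ Suc k - s ^ Suc k) + s ^ Suc k * (n - s)"
    by (simp add: algebra_simps)
  also have "\<dots> \<le> n * (real (Suc k) * n ^ k * (n - s)) + n ^ Suc k * (n - s)"
    using Suc assms by (intro add_mono mult_left_mono mult_right_mono power_mono) auto
  also have "\<dots> = real (Suc (Suc k)) * n ^ Suc k * (n - s)" by (simp add: algebra_simps)
  finally show ?case .
qed

text \<open>For even m, h* belongs to Delta_n^m; note h*(-n) = (1 - m) n^m \<le> 0.\<close>
lemma extremal_poly_in_Delta: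
  assumes "n > 0" "even m" "m \<ge> 1"
  shows "extremal_poly n m \<in> Delta n n m"
proof -
  obtain k where k: "m = Suc k" using assms(3) by (cases m) auto
  have "odd k" using k assms(2) by simp
  have "m \<ge> 2" using assms(2,3) by presburger
  let ?h = "extremal_poly n m"
  have at_minus_n: "poly ?h (-n) = n ^ m - real m * n ^ m"
    using assms(2) by (simp add: poly_extremal_poly k algebra_simps)
  have deg: "degree ?h = m"
    unfolding extremal_poly_def using \<open>m \<ge> 2\<close>
    by (subst degree_add_eq_left)
       (auto simp: degree_monom_eq intro: le_less_trans[OF degree_monom_le])
  have coeffs: "\<forall>i. coeff ?h i \<ge> 0"
    unfolding extremal_poly_def using assms(1) by (simp add: coeff_monom)
  have minimal: "poly ?h (-n) \<le> poly ?h t" if t: "t \<in> {-n..n}" for t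
  proof (cases "t \<ge> 0")
    case True
    have "poly ?h t \<ge> 0" using True assms(1) by (simp add: poly_extremal_poly)
    moreover have "poly ?h (-n) \<le> 0" using at_minus_n assms by simp
    ultimately show ?thesis by linarith
  next
    case False
    define s where "s = - t"
    have "0 \<le> s" "s \<le> n" using False t s_def by auto
    moreover have "t ^ m = s ^ m" using assms(2) s_def by simp
    ultimately show ?thesis
      using power_diff_le[of s n k] at_minus_n
      by (simp add: poly_extremal_poly k s_def algebra_simps)
  qed
  have critical: "poly (pderiv ?h) (-n) = 0"
    using \<open>odd k\<close> by (simp add: extremal_poly_def pderiv_add pderiv_monom poly_monom k)
  show ?thesis unfolding Delta_def using deg coeffs minimal critical by auto
qed

lemma ratio_extremal_poly:
  assumes "n > 0" "even m" "m \<ge> 1"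
  shows "ratio n n (extremal_poly n m) = (real m + 1) / (4 * real m)"
proof -
  obtain k where k: "m = Suc k" using assms(3) by (cases m) auto
  have "poly (extremal_poly n m) n = (real m + 1) * n ^ m"
    by (simp add: poly_extremal_poly k algebra_simps)
  moreover have "poly (extremal_poly n m) (-n) = n ^ m - real m * n ^ m"
    using assms(2) by (simp add: poly_extremal_poly k algebra_simps)
  ultimately have "ratio n n (extremal_poly n m) = (real m + 1) * n ^ m / (4 * real m * n ^ m)"
    unfolding ratio_def by (simp add: algebra_simps)
  then show ?thesis using assms(1) by simp
qed

theorem mainTheorem7:
  fixes n :: real and m :: nat
  assumes "n > 0" and "m \<ge> 1"
  shows "(even m \<longrightarrow>
            (let hs = monom 1 m + monom (real m * n ^ (m - 1)) 1 in
              hs \<in> Delta n n m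
            \<and> ratio n n hs = (real m + 1) / (4 * real m)
            \<and> (\<forall>a\<in>{0<..n}. \<forall>h\<in>Delta n a m. ratio n n hs \<le> ratio n a h)
            \<and> (\<forall>h\<in>Delta n n m. ratio n n hs \<le> ratio n n h)))
       \<and> (odd m \<and> m \<ge> 2 \<longrightarrow>
            (\<exists>h0\<in>Delta n n (m - 1).
                (\<forall>h\<in>Delta n n (m - 1). ratio n n h0 \<le> ratio n n h)
              \<and> (\<forall>h\<in>Delta n n m. ratio n n h0 \<le> ratio n n h)))"
proof (intro conjI impI)
  assume "even m"
  then show "let hs = monom 1 m + monom (real m * n ^ (m - 1)) 1 in
              hs \<in> Delta n n m
            \<and> ratio n n hs = (real m + 1) / (4 * real m)
            \<and> (\<forall>a\<in>{0<..n}. \<forall>h\<in>Delta n a m. ratio n n hs \<le> ratio n a h)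
            \<and> (\<forall>h\<in>Delta n n m. ratio n n hs \<le> ratio n n h)"
    unfolding Let_def extremal_poly_def[symmetric]
    using assms extremal_poly_in_Delta ratio_extremal_poly Delta_ratio_bound[OF assms]
    by auto
next
  assume odd: "odd m \<and> m \<ge> 2"
  let ?h0 = "extremal_poly n (m - 1)"
  have "even (m - 1)" "m - 1 \<ge> 1" using odd by auto
  then have h0: "?h0 \<in> Delta n n (m - 1)"
    and h0_ratio: "ratio n n ?h0 = real m / (4 * (real m - 1))"
    using assms odd extremal_poly_in_Delta ratio_extremal_poly[of n "m - 1"] by (auto simp: of_nat_diff)
  have "\<forall>h\<in>Delta n n (m - 1). ratio n n ?h0 \<le> ratio n n h"
    using h0_ratio Delta_ratio_bound[OF assms(1) \<open>m - 1 \<ge> 1\<close>, of n] assms odd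
    by (auto simp: of_nat_diff)
  moreover have "\<forall>h\<in>Delta n n m. ratio n n ?h0 \<le> ratio n n h"
    using h0_ratio Delta_ratio_bound_odd[OF assms(1)] odd by auto
  ultimately show "\<exists>h0\<in>Delta n n (m - 1).
                (\<forall>h\<in>Delta n n (m - 1). ratio n n h0 \<le> ratio n n h)
              \<and> (\<forall>h\<in>Delta n n m. ratio n n h0 \<le> ratio n n h)"
    using h0 by blast
qed

end
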